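(* Let $p>3$ be a prime. Then $S_p\equiv 4+8(-1)^{\frac{p-1}{2}}p^2E_{p-3}\pmod{p^3}$, $S_{2p}\equiv 20+128(-1)^{\frac{p-1}{2}}p^2E_{p-3}\pmod{p^3}$, and $S_{3p}\equiv 112+1440(-1)^{\frac{p-1}{2}}p^2E_{p-3}\pmod{p^3}$.
   Context: $(S_n)_{n\ge0}$ is the integer sequence defined by $S_0=1$, $S_1=4$ and $(n+1)^2S_{n+1}=4(3n^2+3n+1)S_n-32n^2S_{n-1}$ for $n\ge1$; equivalently $S_n=\sum_{k=0}^n\binom nk\binom{2k}k\binom{2n-2k}{n-k}$. The Euler numbers $E_n$ are defined by $E_0=1$, $E_{2n-1}=0$ and $\sum_{k=0}^n\binom{2n}{2k}E_{2k}=0$ for $n\ge1$. *)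

theory Defs
  imports "HOL-Number_Theory.Cong"
begin

definition S :: "nat \<Rightarrow> int" where
  "S n = (\<Sum>k\<le>n. int (n choose k) * int ((2*k) choose k) * int ((2*n - 2*k) choose (n - k)))"

(* Euler numbers at even index: E2 n = E_{2n}, via E_0 = 1 and
   sum_{k=0}^n binom(2n,2k) E_{2k} = 0 for n >= 1 *)
fun E2 :: "nat \<Rightarrow> int" where
  "E2 n = (if n = 0 then 1 else - (\<Sum>k<n. int ((2*n) choose (2*k)) * E2 k))"

definition euler :: "nat \<Rightarrow> int" where
  "euler n = (if even n then E2 (n div 2) else 0)"

end

theory Submission
  imports Defs "HOL-Number_Theory.Number_Theory"
begin

text \<open>
  Write \<open>S n = \<Sum>k. t(n,k)\<close> with \<open>t(n,k) = C(n,k) C(2k,k) C(2n-2k,n-k)\<close> and take \<open>n = Np\<close> with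
  \<open>N < p\<close>. The terms with \<open>k = jp\<close> satisfy \<open>t(Np,jp) \<equiv> t(N,j) (mod p^3)\<close>, because
  \<open>C(ap,bp) \<equiv> C(a,b) (mod p^3)\<close>; this rests on the Wolstenholme-type congruence
  \<open>(jp+1)(jp+2)...(jp+p-1) \<equiv> (p-1)! (mod p^3)\<close>. A term with \<open>k = ip + r\<close>, \<open>0 < r < p\<close>, contains
  exactly two factors \<open>p\<close>, and Wilson's theorem evaluates it modulo \<open>p^3\<close> as
  \<open>p^2 c (-1)^r r^(p-3)\<close> with \<open>c\<close> depending only on \<open>i\<close> and \<open>N\<close>; the terms for \<open>r\<close> and \<open>p - r\<close>
  coincide by the symmetry \<open>k \<mapsto> n - k\<close>. What remains is the alternating power sum
  \<open>\<Sum>r \<le> (p-1)/2. (-1)^r r^(p-3)\<close>, which is \<open>\<equiv> 2 (-1)^((p-1)/2) E(p-3) (mod p)\<close> because the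
  sums \<open>\<Sum>j<p. (-1)^j (2j+1)^(2m)\<close> satisfy the recurrence of the Euler numbers modulo \<open>p\<close>.
\<close>

section \<open>Congruences modulo a prime\<close>

lemma fermat_theorem_int:
  fixes p a :: nat
  assumes "prime p" "\<not> p dvd a"
  shows "[int a ^ (p - 1) = 1] (mod int p)"
  using fermat_theorem[OF assms] by (metis cong_int_iff of_nat_1 of_nat_power)

lemma coprime_prime_int:
  assumes "prime p" "\<not> int p dvd x"
  shows "coprime x (int p)"
  using assms prime_imp_coprime[of "int p" x] by (simp add: coprime_commute)

lemma coprime_fact_prime_int:
  assumes "prime p" "n < p"
  shows "coprime (fact n :: int) (int p)"
proof (rule coprime_prime_int[OF assms(1)])
  show "\<not> int p dvd fact n"
    using prime_dvd_fact_iff[OF assms(1), of n] assms(2) by (metis of_nat_dvd_iff of_nat_fact not_le)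
qed

lemma cong_mult_square_lift:
  fixes a b m :: int
  assumes "[a = b] (mod m)"
  shows "[m^2 * a = m^2 * b] (mod m^3)"
  using cong_cmult_leftI[OF assms, of "m^2"] by (simp add: power2_eq_square power3_eq_cube ac_simps)

lemma cong_mod_cube_cancel:
  fixes t u a b m :: int
  assumes "t * u = m^2 * a" "[a = b * u] (mod m)" "coprime u (m^3)"
  shows "[t = m^2 * b] (mod m^3)"
proof -
  have "[t * u = m^2 * b * u] (mod m^3)"
    using cong_mult_square_lift[OF assms(2)] assms(1) by (simp add: mult.assoc)
  then show ?thesis using cong_mult_rcancel[OF assms(3)] by blast
qed

lemma odd_prime_half:
  fixes p :: nat
  assumes "prime p" "p > 2"
  shows "p = 2 * ((p - 1) div 2) + 1"
  using prime_odd_nat[OF assms] by presburger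

lemma fact_diff_mult_fact_cong:
  fixes p m :: nat
  assumes "prime p" "1 \<le> m" "m \<le> p - 1"
  shows "[fact (p - m) * fact (m - 1) = ((-1)^m :: int)] (mod int p)"
  using assms(2,3)
proof (induction m rule: dec_induct)
  case base
  then show ?case using wilson_theorem[OF assms(1)] by simp
next
  case (step m)
  have "fact (p - m) = (int p - int m) * (fact (p - Suc m) :: int)"
    using step by (simp add: fact_reduce of_nat_diff)
  with step.IH have IH: "[(int p - int m) * fact (p - Suc m) * fact (m - 1) = ((-1)^m :: int)] (mod int p)"
    using step by simp
  have "[(int p - int m) * fact (p - Suc m) * fact (m - 1) = - int m * fact (p - Suc m) * (fact (m - 1) :: int)] (mod int p)"
    by (intro cong_mult cong_refl) (simp add: cong_iff_dvd_diff)
  from cong_trans[OF cong_sym[OF this] IH]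
  have "[- (fact (p - Suc m) * (int m * fact (m - 1))) = - ((-1::int)^(Suc m))] (mod int p)"
    by (simp add: algebra_simps)
  then have "[fact (p - Suc m) * (int m * fact (m - 1)) = (-1::int)^(Suc m)] (mod int p)"
    using cong_minus_minus_iff by blast
  moreover have "int m * fact (m - 1) = (fact m :: int)"
    using step by (simp add: fact_reduce)
  ultimately show ?case by simp
qed

lemma fact_mult_fact_diff_cong:
  fixes p m :: nat
  assumes "prime p" "0 < m" "m < p"
  shows "[fact m * fact (p - m) = ((-1)^m * int m :: int)] (mod int p)"
proof -
  have eq: "int m * (fact (p - m) * fact (m - 1)) = (fact m * fact (p - m) :: int)"
    using assms fact_reduce[of m, where 'a=int] by simp
  have "[int m * (fact (p - m) * fact (m - 1)) = int m * ((-1)^m :: int)] (mod int p)"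
    using fact_diff_mult_fact_cong[OF assms(1)] assms by (intro cong_scalar_left) simp
  then show ?thesis unfolding eq by (simp add: ac_simps)
qed

lemma sum_reflect_halves:
  fixes g :: "nat \<Rightarrow> 'a::comm_monoid_add"
  assumes "p = 2*h + 1"
  shows "(\<Sum>t\<in>{1..p-1}. g t) = (\<Sum>t\<in>{1..h}. g t + g (p - t))"
proof -
  have "{1..p-1} = {1..h} \<union> {h+1..p-1}" using assms by auto
  then have "(\<Sum>t\<in>{1..p-1}. g t) = (\<Sum>t\<in>{1..h}. g t) + (\<Sum>t\<in>{h+1..p-1}. g t)"
    by (simp add: sum.union_disjoint)
  also have "(\<Sum>t\<in>{h+1..p-1}. g t) = (\<Sum>t\<in>{1..h}. g (p - t))"
    by (rule sum.reindex_bij_witness[of _ "\<lambda>t. p - t" "\<lambda>t. p - t"]) (use assms in auto)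
  finally show ?thesis by (simp add: sum.distrib)
qed

lemma prod_reflect_halves:
  fixes g :: "nat \<Rightarrow> 'a::comm_monoid_mult"
  assumes "p = 2*h + 1"
  shows "(\<Prod>t\<in>{1..p-1}. g t) = (\<Prod>t\<in>{1..h}. g t * g (p - t))"
proof -
  have "{1..p-1} = {1..h} \<union> {h+1..p-1}" using assms by auto
  then have "(\<Prod>t\<in>{1..p-1}. g t) = (\<Prod>t\<in>{1..h}. g t) * (\<Prod>t\<in>{h+1..p-1}. g t)"
    by (simp add: prod.union_disjoint)
  also have "(\<Prod>t\<in>{h+1..p-1}. g t) = (\<Prod>t\<in>{1..h}. g (p - t))"
    by (rule prod.reindex_bij_witness[of _ "\<lambda>t. p - t" "\<lambda>t. p - t"]) (use assms in auto)
  finally show ?thesis by (simp add: prod.distrib)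
qed

lemma sum_powers_dilate_cong:
  fixes p a m :: nat
  assumes "prime p" "\<not> p dvd a"
  shows "[(\<Sum>t\<in>{1..p-1}. t^m) = a^m * (\<Sum>t\<in>{1..p-1}. t^m)] (mod p)"
proof -
  define f where "f t = (a*t) mod p" for t
  have inj: "inj_on f {1..p-1}"
  proof
    fix x y assume x: "x \<in> {1..p-1}" and y: "y \<in> {1..p-1}" and "f x = f y"
    then have "[a*x = a*y] (mod p)" by (simp add: f_def cong_def)
    then have "[x = y] (mod p)"
      using assms cong_mult_lcancel_nat prime_imp_coprime_nat coprime_commute by metis
    moreover have "x < p" "y < p" using x y assms prime_gt_0_nat by auto
    ultimately show "x = y" by (simp add: cong_def)
  qed
  have "f ` {1..p-1} \<subseteq> {1..p-1}"
  proof
    fix z assume "z \<in> f ` {1..p-1}"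
    then obtain x where x: "x \<in> {1..p-1}" "z = (a*x) mod p" by (auto simp: f_def)
    have "\<not> p dvd a*x"
      using x assms prime_dvd_mult_nat[OF assms(1)] by (auto dest: dvd_imp_le)
    then have "z \<noteq> 0" using x by (simp add: mod_eq_0_iff_dvd)
    moreover have "z < p" using x prime_gt_0_nat[OF assms(1)] by simp
    ultimately show "z \<in> {1..p-1}" by simp
  qed
  then have image: "f ` {1..p-1} = {1..p-1}"
    using inj by (intro endo_inj_surj) simp_all
  have "(\<Sum>t\<in>{1..p-1}. t^m) = (\<Sum>t\<in>f ` {1..p-1}. t^m)"
    by (simp only: image)
  also have "\<dots> = (\<Sum>t\<in>{1..p-1}. (f t)^m)"
    using sum.reindex[OF inj, of "\<lambda>t. t^m"] by simp
  also have "[\<dots> = (\<Sum>t\<in>{1..p-1}. (a*t)^m)] (mod p)"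
    by (intro cong_sum cong_pow) (simp add: f_def cong_def)
  also have "(\<Sum>t\<in>{1..p-1}. (a*t)^m) = a^m * (\<Sum>t\<in>{1..p-1}. t^m)"
    by (simp add: power_mult_distrib sum_distrib_left)
  finally show ?thesis .
qed

lemma sum_powers_p_minus_3_cong_0:
  fixes p :: nat
  assumes "prime p" "p > 3"
  shows "[(\<Sum>t\<in>{1..p-1}. t^(p-3)) = 0] (mod p)"
proof -
  define \<sigma> where "\<sigma> = (\<Sum>t\<in>{1..p-1}. t^(p-3))"
  have not_dvd: "\<not> p dvd 2" "\<not> p dvd 3" using assms by (auto dest: dvd_imp_le)
  have "[4 * \<sigma> = 4 * (2^(p-3) * \<sigma>)] (mod p)"
    unfolding \<sigma>_def by (intro cong_scalar_left sum_powers_dilate_cong assms(1) not_dvd)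
  also have "4 * (2^(p-3) * \<sigma>) = 2^(p-1) * \<sigma>"
  proof -
    have "p - 1 = Suc (Suc (p - 3))" using assms by simp
    then show ?thesis by simp
  qed
  also have "[2^(p-1) * \<sigma> = 1 * \<sigma>] (mod p)"
    by (intro cong_scalar_right fermat_theorem assms(1) not_dvd)
  finally have "[3 * \<sigma> + \<sigma> = 0 + \<sigma>] (mod p)" by simp
  then have "p dvd 3 * \<sigma>" using cong_add_rcancel_nat cong_0_iff by blast
  then show ?thesis
    unfolding \<sigma>_def[symmetric] using not_dvd prime_dvd_mult_nat[OF assms(1)] by (auto simp: cong_0_iff)
qed

lemma half_sum_powers_p_minus_3_cong_0:
  fixes p :: nat
  assumes "prime p" "p > 3"
  shows "[(\<Sum>t\<in>{1..(p-1) div 2}. int t^(p-3)) = 0] (mod int p)"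
proof -
  define h where "h = (p-1) div 2"
  have p: "p = 2*h + 1" unfolding h_def using assms by (intro odd_prime_half) auto
  have even: "even (p - 3)" using p by presburger
  have "[int (\<Sum>t\<in>{1..p-1}. t^(p-3)) = int 0] (mod int p)"
    using sum_powers_p_minus_3_cong_0[OF assms] cong_int_iff by blast
  then have "[(\<Sum>t\<in>{1..p-1}. int t^(p-3)) = 0] (mod int p)" by simp
  moreover have "(\<Sum>t\<in>{1..p-1}. int t^(p-3)) = (\<Sum>t\<in>{1..h}. int t^(p-3) + int (p - t)^(p-3))"
    by (rule sum_reflect_halves[OF p])
  moreover have "[(\<Sum>t\<in>{1..h}. int t^(p-3) + int (p - t)^(p-3)) = (\<Sum>t\<in>{1..h}. int t^(p-3) + (- int t)^(p-3))] (mod int p)"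
  proof (intro cong_sum cong_add cong_refl cong_pow)
    fix t assume "t \<in> {1..h}"
    then have "int (p - t) = int p - int t" using p by auto
    then show "[int (p - t) = - int t] (mod int p)" by (simp add: cong_iff_dvd_diff)
  qed
  moreover have "(\<Sum>t\<in>{1..h}. int t^(p-3) + (- int t)^(p-3)) = 2 * (\<Sum>t\<in>{1..h}. int t^(p-3))"
    using even by (simp add: sum_distrib_left)
  ultimately have "[2 * (\<Sum>t\<in>{1..h}. int t^(p-3)) = 2 * 0] (mod int p)"
    by (metis cong_sym cong_trans mult_zero_right)
  moreover have "coprime 2 (int p)" using p by (simp add: coprime_left_2_iff_odd)
  ultimately show ?thesis unfolding h_def by (metis cong_mult_lcancel)
qed

section \<open>A Wolstenholme-type congruence\<close>

lemma prod_add_const_expansion: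
  fixes a :: "'b \<Rightarrow> 'a::comm_ring_1"
  assumes "finite A"
  shows "\<exists>R. (\<Prod>t\<in>A. a t + c) = (\<Prod>t\<in>A. a t) + c * (\<Sum>t\<in>A. \<Prod>s\<in>A-{t}. a s) + c^2 * R"
  using assms
proof (induction A rule: finite_induct)
  case empty
  then show ?case by (auto intro: exI[of _ 0])
next
  case (insert x F)
  then obtain R where R: "(\<Prod>t\<in>F. a t + c) = (\<Prod>t\<in>F. a t) + c * (\<Sum>t\<in>F. \<Prod>s\<in>F-{t}. a s) + c^2 * R"
    by blast
  define P where "P = (\<Prod>t\<in>F. a t)"
  define Q where "Q = (\<Sum>t\<in>F. \<Prod>s\<in>F-{t}. a s)"
  have "(\<Sum>t\<in>F. \<Prod>s\<in>insert x F-{t}. a s) = (\<Sum>t\<in>F. a x * (\<Prod>s\<in>F-{t}. a s))"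
  proof (rule sum.cong[OF refl])
    fix t assume "t \<in> F"
    then have "insert x F - {t} = insert x (F - {t})" using insert by auto
    then show "(\<Prod>s\<in>insert x F-{t}. a s) = a x * (\<Prod>s\<in>F-{t}. a s)" using insert by simp
  qed
  moreover have "(\<Prod>s\<in>insert x F-{x}. a s) = P"
    unfolding P_def using insert by (simp add: insert_Diff_if)
  ultimately have "(\<Sum>t\<in>insert x F. \<Prod>s\<in>insert x F-{t}. a s) = P + a x * Q"
    using insert by (simp add: Q_def sum_distrib_left)
  moreover have "(\<Prod>t\<in>insert x F. a t + c) = (a x + c) * (P + c * Q + c^2 * R)"
    using insert R by (simp add: P_def Q_def)
  moreover have "\<dots> = a x * P + c * (P + a x * Q) + c^2 * (Q + (a x + c) * R)"
    by (simp add: algebra_simps power2_eq_square)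
  ultimately show ?case using insert by (auto simp: P_def)
qed

lemma prime_dvd_sum_prod_remove:
  fixes p :: nat
  assumes "prime p" "p > 3"
  defines "h \<equiv> (p - 1) div 2"
  shows "int p dvd (\<Sum>t\<in>{1..h}. \<Prod>s\<in>{1..h}-{t}. int p * int s - int s^2)"
proof -
  define G where "G = (\<Prod>s\<in>{1..h}. - (int s^2))"
  \<comment> \<open>modulo \<open>p\<close>, \<open>t^(p-3)\<close> is the inverse of \<open>t^2\<close>\<close>
  have "[(\<Prod>s\<in>{1..h}-{t}. int p * int s - int s^2) = - G * int t^(p-3)] (mod int p)"
    if t: "t \<in> {1..h}" for t
  proof -
    define P where "P = (\<Prod>s\<in>{1..h}-{t}. - (int s^2))"
    have "t < p" using t assms unfolding h_def by auto
    then have "[int t ^ (p - 1) = 1] (mod int p)"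
      using t by (intro fermat_theorem_int assms(1)) (auto dest: dvd_imp_le)
    have "p - 1 = 2 + (p - 3)" using assms by simp
    then have power: "int t ^ (p - 1) = int t^2 * int t^(p-3)" by (simp only: power_add)
    have G: "G = - (int t^2) * P" unfolding G_def P_def using t by (simp add: prod.remove)
    have "[(\<Prod>s\<in>{1..h}-{t}. int p * int s - int s^2) = P] (mod int p)"
      unfolding P_def by (rule cong_prod) (simp add: cong_iff_dvd_diff)
    also have "[P = P * int t ^ (p - 1)] (mod int p)"
      using cong_scalar_left[OF cong_sym[OF \<open>[int t ^ (p - 1) = 1] (mod int p)\<close>], of P] by simp
    also have "P * int t ^ (p - 1) = - G * int t^(p-3)"
      unfolding power G by (simp add: algebra_simps)
    finally show ?thesis .
  qed
  then have "[(\<Sum>t\<in>{1..h}. \<Prod>s\<in>{1..h}-{t}. int p * int s - int s^2) = (\<Sum>t\<in>{1..h}. - G * int t^(p-3))] (mod int p)"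
    by (rule cong_sum)
  also have "(\<Sum>t\<in>{1..h}. - G * int t^(p-3)) = - G * (\<Sum>t\<in>{1..h}. int t^(p-3))"
    by (simp add: sum_distrib_left)
  also have "[\<dots> = - G * 0] (mod int p)"
    using half_sum_powers_p_minus_3_cong_0[OF assms(1,2)] unfolding h_def by (rule cong_scalar_left)
  finally show ?thesis by (simp add: cong_0_iff)
qed

definition block_prod :: "nat \<Rightarrow> nat \<Rightarrow> nat" where
  "block_prod p j = (\<Prod>t\<in>{1..p-1}. j*p + t)"

lemma block_prod_pairs:
  fixes p h j :: nat
  assumes "p = 2*h + 1"
  shows "int (block_prod p j) = (\<Prod>t\<in>{1..h}. (int p * int t - int t^2) + int (j*(j+1)) * int p^2)"
proof -
  have "int (block_prod p j) = (\<Prod>t\<in>{1..h}. (int (j*p) + int t) * (int (j*p) + int (p - t)))"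
    unfolding block_prod_def of_nat_prod of_nat_add by (rule prod_reflect_halves[OF assms])
  also have "\<dots> = (\<Prod>t\<in>{1..h}. (int p * int t - int t^2) + int (j*(j+1)) * int p^2)"
  proof (rule prod.cong[OF refl])
    fix t assume "t \<in> {1..h}"
    then have "int (p - t) = int p - int t" using assms by auto
    then show "(int (j*p) + int t) * (int (j*p) + int (p - t)) = (int p * int t - int t^2) + int (j*(j+1)) * int p^2"
      by (simp add: algebra_simps power2_eq_square)
  qed
  finally show ?thesis .
qed

text \<open>Expanding the paired product to first order in \<open>j(j+1)p^2\<close> leaves \<open>p^2\<close> times a sum
  that is divisible by \<open>p\<close>.\<close>

lemma block_prod_cong_fact:
  fixes p j :: nat
  assumes "prime p" "p > 3"
  shows "[int (block_prod p j) = fact (p - 1)] (mod (int p ^ 3))"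
proof -
  define h where "h = (p - 1) div 2"
  have p: "p = 2*h + 1" unfolding h_def using assms by (intro odd_prime_half) auto
  define a where "a t = int p * int t - int t^2" for t
  define c where "c = int (j*(j+1)) * int p^2"
  define Q where "Q = (\<Sum>t\<in>{1..h}. \<Prod>s\<in>{1..h}-{t}. a s)"
  obtain R where R: "(\<Prod>t\<in>{1..h}. a t + c) = (\<Prod>t\<in>{1..h}. a t) + c * Q + c^2 * R"
    unfolding Q_def using prod_add_const_expansion[of "{1..h}" a c] by auto
  have "(\<Prod>t\<in>{1..h}. a t) = fact (p - 1)"
    using block_prod_pairs[OF p, of 0] by (simp add: a_def block_prod_def fact_prod)
  moreover obtain q where "Q = int p * q"
    using prime_dvd_sum_prod_remove[OF assms] unfolding Q_def a_def h_def by (auto elim: dvdE)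
  then have "c * Q + c^2 * R = int p ^ 3 * (int (j*(j+1)) * q + int p * int (j*(j+1))^2 * R)"
    by (simp add: c_def power2_eq_square power3_eq_cube algebra_simps)
  ultimately have "int (block_prod p j) = fact (p - 1) + int p ^ 3 * (int (j*(j+1)) * q + int p * int (j*(j+1))^2 * R)"
    using block_prod_pairs[OF p, of j] R unfolding a_def c_def by (simp add: add.assoc)
  then show ?thesis by (simp add: cong_iff_dvd_diff)
qed

section \<open>Factorials of multiples of a prime\<close>

lemma fact_add_eq_prod:
  "fact (n + s) = (fact n :: nat) * (\<Prod>t\<in>{1..s}. n + t)"
  by (induction s) (simp_all add: prod.cl_ivl_Suc algebra_simps)

lemma fact_mult_eq:
  fixes p q :: nat
  assumes "0 < p"
  shows "fact (q*p) = p^q * fact q * (\<Prod>j<q. block_prod p j)"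
proof (induction q)
  case 0
  then show ?case by simp
next
  case (Suc q)
  have "{1..p} = insert p {1..p-1}" using assms by auto
  then have "(\<Prod>t\<in>{1..p}. q*p + t) = block_prod p q * ((q + 1) * p)"
    using assms by (simp add: block_prod_def mult.commute)
  moreover have "fact (Suc q * p) = fact (q*p) * (\<Prod>t\<in>{1..p}. q*p + t)"
    using fact_add_eq_prod[of "q*p" p] by (simp add: add.commute)
  ultimately show ?case using Suc by (simp add: algebra_simps)
qed

definition fact_unit_part :: "nat \<Rightarrow> nat \<Rightarrow> nat \<Rightarrow> nat" where
  "fact_unit_part p q s = (\<Prod>j<q. block_prod p j) * (\<Prod>t\<in>{1..s}. q*p + t)"

lemma fact_mult_add_eq:
  fixes p q s :: nat
  assumes "0 < p"
  shows "fact (q*p + s) = p^q * fact q * fact_unit_part p q s"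
  using fact_add_eq_prod[of "q*p" s] fact_mult_eq[OF assms, of q]
  by (simp add: fact_unit_part_def algebra_simps)

lemma binomial_fact_unit_part_eq:
  fixes p n k a b c e s t u :: nat
  assumes "0 < p" "k \<le> n" "k = a*p + s" "n - k = b*p + t" "n = c*p + u" "c = a + b + e"
  shows "fact a * fact b * fact_unit_part p a s * fact_unit_part p b t * (n choose k)
       = p^e * (fact c * fact_unit_part p c u)"
proof -
  have "p^(a+b) * (fact a * fact b * fact_unit_part p a s * fact_unit_part p b t * (n choose k))
      = p^c * (fact c * fact_unit_part p c u)"
    using binomial_fact_lemma[OF assms(2)] unfolding assms(4) unfolding assms(3,5) fact_mult_add_eq[OF assms(1)] power_add
    by (simp add: ac_simps)
  moreover have "p^c = p^(a+b) * p^e"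
    unfolding assms(6) by (simp add: power_add)
  ultimately show ?thesis
    using assms(1) by (simp add: mult.assoc)
qed

lemma block_prod_cong_minus_one:
  assumes "prime p"
  shows "[int (block_prod p j) = -1] (mod int p)"
proof -
  have "[int (block_prod p j) = (\<Prod>t\<in>{1..p-1}. int t)] (mod int p)"
    unfolding block_prod_def of_nat_prod by (rule cong_prod) (simp add: cong_iff_dvd_diff)
  also have "(\<Prod>t\<in>{1..p-1}. int t) = fact (p - 1)" by (simp add: fact_prod)
  also have "[\<dots> = -1] (mod int p)" by (rule wilson_theorem[OF assms])
  finally show ?thesis .
qed

lemma fact_unit_part_cong:
  assumes "prime p"
  shows "[int (fact_unit_part p q s) = (-1)^q * fact s] (mod int p)"
proof -
  have "[int (fact_unit_part p q s) = (\<Prod>j<q. (-1::int)) * (\<Prod>t\<in>{1..s}. int t)] (mod int p)"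
    unfolding fact_unit_part_def of_nat_mult of_nat_prod
    by (intro cong_mult cong_prod block_prod_cong_minus_one[OF assms]) (simp add: cong_iff_dvd_diff)
  then show ?thesis by (simp add: fact_prod)
qed

lemma fact_unit_part_complement_cong:
  assumes "prime p" "0 < r" "r < p"
  shows "[int (fact_unit_part p i r) * int (fact_unit_part p i' (p - r)) = (-1)^(i + i' + r) * int r] (mod int p)"
proof -
  have "[int (fact_unit_part p i r) * int (fact_unit_part p i' (p - r)) = (-1)^i * (-1)^i' * (fact r * fact (p - r))] (mod int p)"
    using cong_mult[OF fact_unit_part_cong fact_unit_part_cong, OF assms(1) assms(1)] by (simp add: ac_simps)
  also have "[(-1)^i * (-1)^i' * (fact r * fact (p - r)) = (-1)^i * (-1)^i' * ((-1)^r * int r)] (mod int p)"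
    using cong_scalar_left[OF fact_mult_fact_diff_cong[OF assms], of "(-1)^i * (-1)^i'"] by simp
  finally show ?thesis by (simp add: power_add ac_simps)
qed

lemma fact_unit_part_cong_mod_cube:
  assumes "prime p" "p > 3"
  shows "[int (fact_unit_part p q 0) = fact (p - 1) ^ q] (mod (int p ^ 3))"
proof -
  have "[(\<Prod>j<q. int (block_prod p j)) = (\<Prod>j<q. fact (p - 1))] (mod (int p ^ 3))"
    by (rule cong_prod) (rule block_prod_cong_fact[OF assms])
  then show ?thesis by (simp add: fact_unit_part_def)
qed

lemma binomial_mult_prime_cong:
  fixes p a b :: nat
  assumes "prime p" "p > 3" "b \<le> a" "b < p" "a - b < p"
  shows "[int ((a*p) choose (b*p)) = int (a choose b)] (mod (int p ^ 3))"
proof -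
  define W :: int where "W = fact (p - 1)"
  define u :: int where "u = fact b * fact (a - b) * W ^ a"
  define C where "C = (a*p) choose (b*p)"
  have units: "[int (fact_unit_part p q 0) = W ^ q] (mod (int p ^ 3))" for q
    unfolding W_def using fact_unit_part_cong_mod_cube[OF assms(1,2)] .
  have "a*p - b*p = (a-b)*p" "a = b + (a-b) + 0" "0 < p" "b*p \<le> a*p"
    using assms by (simp_all add: diff_mult_distrib)
  from binomial_fact_unit_part_eq[of p "b*p" "a*p" b 0 "a-b" 0 a 0 0] this
  have exact: "fact b * fact (a-b) * fact_unit_part p b 0 * fact_unit_part p (a-b) 0 * C = fact a * fact_unit_part p a 0"
    unfolding C_def by simp
  have "W ^ a = W ^ b * W ^ (a - b)" using assms by (simp flip: power_add)
  then have "int C * u = fact b * fact (a-b) * W ^ b * W ^ (a-b) * int C"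
    by (simp add: u_def ac_simps)
  also have "[fact b * fact (a-b) * W ^ b * W ^ (a-b) * int C
      = fact b * fact (a-b) * int (fact_unit_part p b 0) * int (fact_unit_part p (a-b) 0) * int C] (mod (int p ^ 3))"
    by (intro cong_mult cong_refl cong_sym[OF units])
  also have "fact b * fact (a-b) * int (fact_unit_part p b 0) * int (fact_unit_part p (a-b) 0) * int C
      = fact a * int (fact_unit_part p a 0)"
    using arg_cong[OF exact, of int] by simp
  also have "[fact a * int (fact_unit_part p a 0) = fact a * W ^ a] (mod (int p ^ 3))"
    by (intro cong_scalar_left units)
  also have "fact a * W ^ a = int (a choose b) * u"
  proof -
    have "(fact a :: int) = fact b * fact (a - b) * int (a choose b)"
      using binomial_fact_lemma[OF assms(3)] by (metis of_nat_fact of_nat_mult)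
    then show ?thesis by (simp add: u_def ac_simps)
  qed
  finally have "[int C * u = int (a choose b) * u] (mod (int p ^ 3))" .
  moreover have "coprime u (int p ^ 3)"
    unfolding u_def W_def using assms coprime_fact_prime_int[OF assms(1)] by simp
  ultimately show ?thesis unfolding C_def using cong_mult_rcancel by blast
qed

section \<open>The summands of \<open>S\<close>\<close>

definition S_term :: "nat \<Rightarrow> nat \<Rightarrow> int" where
  "S_term n k = int (n choose k) * int ((2*k) choose k) * int ((2*(n-k)) choose (n-k))"

lemma S_eq_sum_S_term: "S n = (\<Sum>k\<le>n. S_term n k)"
  unfolding S_def S_term_def by (intro sum.cong refl) (simp add: diff_mult_distrib2)

lemma S_term_sym: "k \<le> n \<Longrightarrow> S_term n (n - k) = S_term n k"
  unfolding S_term_def by (simp add: binomial_symmetric[symmetric] mult.commute)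

lemma sum_atMost_mult_split:
  fixes g :: "nat \<Rightarrow> 'a::comm_monoid_add" and p :: nat
  assumes "0 < p"
  shows "(\<Sum>k\<le>N*p. g k) = (\<Sum>j\<le>N. g (j*p)) + (\<Sum>i<N. \<Sum>r\<in>{1..p-1}. g (i*p + r))"
proof -
  have block: "(\<Sum>k\<in>{i*p..<i*p+p}. g k) = g (i*p) + (\<Sum>r\<in>{1..p-1}. g (i*p + r))" for i
  proof -
    have "{i*p..<i*p+p} = insert (i*p) {i*p+1..i*p+(p-1)}" using assms by auto
    moreover have "(\<Sum>k\<in>{i*p+1..i*p+(p-1)}. g k) = (\<Sum>r\<in>{1..p-1}. g (i*p + r))"
      by (rule sum.reindex_bij_witness[of _ "\<lambda>r. i*p + r" "\<lambda>k. k - i*p"]) auto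
    ultimately show ?thesis by simp
  qed
  have "(\<Sum>k\<le>N*p. g k) = (\<Sum>k<N*p. g k) + g (N*p)"
    by (simp add: lessThan_Suc_atMost[symmetric])
  also have "(\<Sum>k<N*p. g k) = (\<Sum>i<N. g (i*p)) + (\<Sum>i<N. \<Sum>r\<in>{1..p-1}. g (i*p + r))"
    unfolding sum.nat_group[symmetric] block by (simp add: sum.distrib)
  finally show ?thesis by (simp add: lessThan_Suc_atMost[symmetric] ac_simps)
qed

lemma S_mult_eq:
  fixes p h N :: nat
  assumes "p = 2*h + 1"
  shows "S (N*p) = (\<Sum>j\<le>N. S_term (N*p) (j*p)) + 2 * (\<Sum>i<N. \<Sum>r\<in>{1..h}. S_term (N*p) (i*p + r))"
proof -
  define g where "g = S_term (N*p)"
  have sym: "g (i*p + (p - r)) = g ((N - Suc i)*p + r)" if "i < N" "r \<in> {1..h}" for i r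
  proof -
    have "N = i + 1 + (N - Suc i)" using that by simp
    then have "N*p = i*p + p + (N - Suc i)*p" by (metis add_mult_distrib mult_1)
    then have "N*p = (i*p + (p - r)) + ((N - Suc i)*p + r)" using that assms by simp
    then have "i*p + (p - r) = N*p - ((N - Suc i)*p + r)" "(N - Suc i)*p + r \<le> N*p" by simp_all
    then show ?thesis unfolding g_def using S_term_sym by simp
  qed
  have "S (N*p) = (\<Sum>j\<le>N. g (j*p)) + (\<Sum>i<N. \<Sum>r\<in>{1..p-1}. g (i*p + r))"
    unfolding S_eq_sum_S_term g_def using assms by (intro sum_atMost_mult_split) simp
  also have "(\<Sum>i<N. \<Sum>r\<in>{1..p-1}. g (i*p + r)) = (\<Sum>i<N. \<Sum>r\<in>{1..h}. g (i*p + r) + g (i*p + (p - r)))"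
    by (intro sum.cong refl sum_reflect_halves[OF assms])
  also have "\<dots> = (\<Sum>i<N. \<Sum>r\<in>{1..h}. g (i*p + r) + g ((N - Suc i)*p + r))"
    using sym by (intro sum.cong refl) auto
  also have "\<dots> = (\<Sum>i<N. \<Sum>r\<in>{1..h}. g (i*p + r)) + (\<Sum>i<N. \<Sum>r\<in>{1..h}. g ((N - Suc i)*p + r))"
    by (simp add: sum.distrib)
  also have "(\<Sum>i<N. \<Sum>r\<in>{1..h}. g ((N - Suc i)*p + r)) = (\<Sum>i<N. \<Sum>r\<in>{1..h}. g (i*p + r))"
    by (rule sum.nat_diff_reindex)
  finally show ?thesis unfolding g_def by simp
qed

lemma S_term_mult_cong:
  fixes p N j :: nat
  assumes "prime p" "p > 3" "N < p" "j \<le> N"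
  shows "[S_term (N*p) (j*p) = S_term N j] (mod (int p ^ 3))"
proof -
  have "2*(j*p) = (2*j)*p" "N*p - j*p = (N-j)*p" "2*((N-j)*p) = (2*(N-j))*p"
    by (simp_all add: diff_mult_distrib)
  moreover have "[int ((N*p) choose (j*p)) = int (N choose j)] (mod (int p ^ 3))"
    "[int (((2*j)*p) choose (j*p)) = int ((2*j) choose j)] (mod (int p ^ 3))"
    "[int (((2*(N-j))*p) choose ((N-j)*p)) = int ((2*(N-j)) choose (N-j))] (mod (int p ^ 3))"
    using assms by (auto intro: binomial_mult_prime_cong)
  ultimately show ?thesis unfolding S_term_def by (metis cong_mult)
qed

definition S_block_coeff :: "nat \<Rightarrow> nat \<Rightarrow> nat" where
  "S_block_coeff i i' = 2 * (i + i' + 1) * ((i + i') choose i) * ((2*i) choose i) * (2*i' + 1) * ((2*i') choose i')"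

lemma S_block_coeff_fact:
  "S_block_coeff i i' * (fact i^3 * fact i'^3) = 2 * (fact (i + i' + 1) * fact (2*i) * fact (2*i' + 1) :: nat)"
proof -
  have N: "fact (i + i' + 1) = (i + i' + 1) * (fact i * fact i' * ((i + i') choose i))"
    using binomial_fact_lemma[of i "i + i'"] by simp
  have L: "fact (2*i) = fact i * fact i * ((2*i) choose i)"
    using binomial_fact_lemma[of i "2*i"] by (simp add: mult_2)
  have R: "fact (2*i' + 1) = (2*i' + 1) * (fact i' * fact i' * ((2*i') choose i'))"
    using binomial_fact_lemma[of i' "2*i'"] by (simp add: mult_2)
  show ?thesis
    unfolding N L R S_block_coeff_def power3_eq_cube by (simp only: ac_simps)
qed

lemma S_term_unit_part_eq:
  fixes p i i' r :: nat
  assumes "0 < p" "0 < r" "2*r < p"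
  defines "N \<equiv> i + i' + 1"
  shows "S_term (N*p) (i*p + r) * int (fact i^3 * fact i'^3 * (fact_unit_part p i r * fact_unit_part p i' (p - r))^3)
       = int p^2 * int (fact N * fact (2*i) * fact (2*i'+1)
           * (fact_unit_part p N 0 * (fact_unit_part p (2*i) (2*r) * fact_unit_part p (2*i'+1) (p - 2*r))))"
proof -
  define k where "k = i*p + r"
  define V1 where "V1 = fact_unit_part p i r"
  define V2 where "V2 = fact_unit_part p i' (p - r)"
  define Vn where "Vn = fact_unit_part p N 0"
  define V3 where "V3 = fact_unit_part p (2*i) (2*r)"
  define V4 where "V4 = fact_unit_part p (2*i'+1) (p - 2*r)"
  define C1 where "C1 = (N*p) choose k"
  define C2 where "C2 = (2*k) choose k"
  define C3 where "C3 = (2*(N*p - k)) choose (N*p - k)"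
  have Nk: "N*p - k = i'*p + (p - r)" and "k \<le> N*p" "N = i + i' + 1"
    using assms by (simp_all add: k_def N_def algebra_simps)
  from binomial_fact_unit_part_eq[OF assms(1) this(2) k_def Nk add_0_right[symmetric] this(3)]
  have e1: "fact i * fact i' * V1 * V2 * C1 = p * (fact N * Vn)"
    unfolding V1_def V2_def Vn_def C1_def by simp
  have "k \<le> 2*k" "2*k - k = i*p + r" "2*k = (2*i)*p + 2*r" "2*i = i + i + 0"
    unfolding k_def by simp_all
  from binomial_fact_unit_part_eq[OF assms(1) this(1) k_def this(2-4)]
  have e2: "fact i * fact i * V1 * V1 * C2 = fact (2*i) * V3"
    unfolding V1_def V3_def C2_def by simp
  have "N*p - k \<le> 2*(N*p - k)" "2*(N*p - k) - (N*p - k) = i'*p + (p - r)"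
    "2*(N*p - k) = (2*i'+1)*p + (p - 2*r)" "2*i' + 1 = i' + i' + 1"
    using assms(3) unfolding Nk by (simp_all add: algebra_simps)
  from binomial_fact_unit_part_eq[OF assms(1) this(1) Nk this(2-4)]
  have e3: "fact i' * fact i' * V2 * V2 * C3 = p * (fact (2*i'+1) * V4)"
    unfolding V2_def V4_def C3_def by simp
  have "C1 * C2 * C3 * (fact i^3 * fact i'^3 * (V1 * V2)^3)
      = (fact i * fact i' * V1 * V2 * C1) * (fact i * fact i * V1 * V1 * C2) * (fact i' * fact i' * V2 * V2 * C3)"
    by (simp only: power3_eq_cube power_mult_distrib ac_simps)
  also have "\<dots> = p^2 * (fact N * fact (2*i) * fact (2*i'+1) * (Vn * (V3 * V4)))"
    unfolding e1 e2 e3 by (simp only: power2_eq_square ac_simps)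
  finally have "int (C1 * C2 * C3 * (fact i^3 * fact i'^3 * (V1 * V2)^3))
      = int (p^2 * (fact N * fact (2*i) * fact (2*i'+1) * (Vn * (V3 * V4))))"
    by (rule arg_cong)
  then show ?thesis
    unfolding S_term_def C1_def C2_def C3_def k_def V1_def V2_def Vn_def V3_def V4_def
    by (simp only: of_nat_mult of_nat_power)
qed

lemma fact_unit_part_doubled_cong:
  assumes "prime p" "0 < r" "2*r < p"
  shows "[int (fact_unit_part p (i + i' + 1) 0 * (fact_unit_part p (2*i) (2*r) * fact_unit_part p (2*i'+1) (p - 2*r)))
          = (-1)^(i + i') * int (2*r)] (mod int p)"
proof -
  have "[int (fact_unit_part p (i + i' + 1) 0) = (-1)^(i + i' + 1)] (mod int p)"
    using fact_unit_part_cong[OF assms(1), of "i + i' + 1" 0] by simp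
  moreover have "[int (fact_unit_part p (2*i) (2*r) * fact_unit_part p (2*i'+1) (p - 2*r))
      = (-1)^(2*i + (2*i'+1) + 2*r) * int (2*r)] (mod int p)"
    using fact_unit_part_complement_cong[OF assms(1), where r = "2*r" and i = "2*i" and i' = "2*i'+1"] assms
    by simp
  ultimately have "[int (fact_unit_part p (i + i' + 1) 0 * (fact_unit_part p (2*i) (2*r) * fact_unit_part p (2*i'+1) (p - 2*r)))
      = (-1)^(i + i' + 1) * (-1)^(2*i + (2*i'+1) + 2*r) * int (2*r)] (mod int p)"
    unfolding of_nat_mult[of "fact_unit_part p (i + i' + 1) 0"] mult.assoc by (rule cong_mult)
  moreover have "(-1::int)^(i + i' + 1) * (-1)^(2*i + (2*i'+1) + 2*r) = (-1)^(i + i')"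
    by (simp add: minus_one_power_iff)
  ultimately show ?thesis by metis
qed

text \<open>Both \<open>C(Np,k)\<close> and \<open>C(2(Np-k),Np-k)\<close> contribute one factor \<open>p\<close>; modulo \<open>p\<close> the remaining
  unit parts are evaluated by Wilson's theorem, and Fermat's theorem turns the resulting \<open>1/r^2\<close>
  into \<open>r^(p-3)\<close>.\<close>

lemma S_term_cong:
  fixes p i i' r :: nat
  assumes "prime p" "p > 3" "i + i' < p" "0 < r" "2*r < p"
  shows "[S_term ((i + i' + 1)*p) (i*p + r)
          = int p^2 * (int (S_block_coeff i i') * ((-1)^r * int r^(p-3)))] (mod (int p ^ 3))"
proof -
  define V where "V = int (fact_unit_part p i r * fact_unit_part p i' (p - r))"
  define W where "W = int (fact_unit_part p (i + i' + 1) 0 * (fact_unit_part p (2*i) (2*r) * fact_unit_part p (2*i'+1) (p - 2*r)))"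
  define I :: int where "I = fact i^3 * fact i'^3"
  define K :: int where "K = fact (i + i' + 1) * fact (2*i) * fact (2*i'+1)"
  define c where "c = int (S_block_coeff i i')"
  define \<epsilon> :: int where "\<epsilon> = (-1)^(i+i')"
  have V: "[V = (-1)^(i+i'+r) * int r] (mod int p)"
    unfolding V_def of_nat_mult using fact_unit_part_complement_cong[OF assms(1,4)] assms by simp
  have cI: "c * I = 2 * K"
    using arg_cong[OF S_block_coeff_fact[of i i'], of int]
    unfolding c_def I_def K_def of_nat_mult of_nat_power of_nat_fact of_nat_numeral .
  have "p - 3 + 3 = Suc (p - 1)" using assms by simp
  then have power: "int r^(p-3) * int r^3 = int r^(p-1) * int r"
    by (metis power_add power_Suc2)
  have "c * ((-1)^r * int r^(p-3)) * (I * V^3) = 2 * K * ((-1)^r * int r^(p-3) * V^3)"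
    using cI by (simp add: ac_simps)
  also have "[2 * K * ((-1)^r * int r^(p-3) * V^3) = 2 * K * ((-1)^r * int r^(p-3) * ((-1)^(i+i'+r) * int r)^3)] (mod int p)"
    by (intro cong_mult cong_refl cong_pow V)
  also have "2 * K * ((-1)^r * int r^(p-3) * ((-1)^(i+i'+r) * int r)^3)
      = 2 * K * ((-1)^r * ((-1)^(i+i'+r))^3) * (int r^(p-1) * int r)"
    unfolding power[symmetric] by (simp only: power_mult_distrib ac_simps)
  also have "[2 * K * ((-1)^r * ((-1)^(i+i'+r))^3) * (int r^(p-1) * int r) = 2 * K * ((-1)^r * ((-1)^(i+i'+r))^3) * (1 * int r)] (mod int p)"
    using assms by (intro cong_scalar_left cong_scalar_right fermat_theorem_int) (auto dest: dvd_imp_le)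
  also have "2 * K * ((-1)^r * ((-1)^(i+i'+r))^3) * (1 * int r) = K * (\<epsilon> * int (2*r))"
    unfolding \<epsilon>_def by (simp add: minus_one_power_iff)
  also have "[K * (\<epsilon> * int (2*r)) = K * W] (mod int p)"
    unfolding \<epsilon>_def W_def using fact_unit_part_doubled_cong[OF assms(1,4,5)]
    by (intro cong_scalar_left) (rule cong_sym)
  finally have modp: "[K * W = c * ((-1)^r * int r^(p-3)) * (I * V^3)] (mod int p)"
    by (rule cong_sym)
  have "\<not> int p dvd int r"
    using assms by (auto dest: dvd_imp_le)
  then have "\<not> int p dvd V"
    using cong_dvd_iff[OF V] by (simp add: minus_one_power_iff)
  then have "coprime (I * V^3) (int p ^ 3)"
    unfolding I_def using assms coprime_prime_int[OF assms(1)] coprime_fact_prime_int[OF assms(1)]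
    by simp
  moreover have "S_term ((i + i' + 1)*p) (i*p + r) * (I * V^3) = int p^2 * (K * W)"
    using S_term_unit_part_eq[of p r i i'] assms
    unfolding I_def V_def K_def W_def of_nat_mult of_nat_power of_nat_fact
    by (simp only: mult.assoc)
  ultimately show ?thesis
    using cong_mod_cube_cancel modp unfolding c_def by blast
qed

definition alt_half_power_sum :: "nat \<Rightarrow> int" where
  "alt_half_power_sum p = (\<Sum>r\<in>{1..(p-1) div 2}. (-1)^r * int r^(p-3))"

definition S_mult_coeff :: "nat \<Rightarrow> nat" where
  "S_mult_coeff N = (\<Sum>i<N. S_block_coeff i (N - 1 - i))"

lemma S_mult_cong_alt_half_power_sum:
  fixes p N :: nat
  assumes "prime p" "p > 3" "N < p"
  shows "[S (N*p) = S N + 2 * int p^2 * int (S_mult_coeff N) * alt_half_power_sum p] (mod (int p ^ 3))"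
proof -
  define h where "h = (p - 1) div 2"
  have p: "p = 2*h + 1" unfolding h_def using assms by (intro odd_prime_half) auto
  have "[(\<Sum>i<N. \<Sum>r\<in>{1..h}. S_term (N*p) (i*p + r))
      = (\<Sum>i<N. \<Sum>r\<in>{1..h}. int p^2 * (int (S_block_coeff i (N - 1 - i)) * ((-1)^r * int r^(p-3))))] (mod (int p ^ 3))"
  proof (intro cong_sum)
    fix i r assume "i \<in> {..<N}" "r \<in> {1..h}"
    then have "N = i + (N - 1 - i) + 1" "i + (N - 1 - i) < p" "0 < r" "2*r < p"
      using assms p by auto
    then show "[S_term (N*p) (i*p + r) = int p^2 * (int (S_block_coeff i (N - 1 - i)) * ((-1)^r * int r^(p-3)))] (mod (int p ^ 3))"
      using S_term_cong[OF assms(1,2), of i "N - 1 - i" r] by simp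
  qed
  also have "(\<Sum>i<N. \<Sum>r\<in>{1..h}. int p^2 * (int (S_block_coeff i (N - 1 - i)) * ((-1)^r * int r^(p-3))))
      = int p^2 * (int (S_mult_coeff N) * alt_half_power_sum p)"
    unfolding S_mult_coeff_def alt_half_power_sum_def h_def[symmetric] of_nat_sum sum_product
    by (simp only: sum_distrib_left)
  finally have non_multiples: "[2 * (\<Sum>i<N. \<Sum>r\<in>{1..h}. S_term (N*p) (i*p + r)) = 2 * (int p^2 * (int (S_mult_coeff N) * alt_half_power_sum p))] (mod (int p ^ 3))"
    by (rule cong_scalar_left)
  have multiples: "[(\<Sum>j\<le>N. S_term (N*p) (j*p)) = S N] (mod (int p ^ 3))"
    unfolding S_eq_sum_S_term using assms by (intro cong_sum S_term_mult_cong) auto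
  from cong_add[OF multiples non_multiples] show ?thesis
    unfolding S_mult_eq[OF p] by (simp only: mult.assoc)
qed

section \<open>Alternating power sums and Euler numbers\<close>

definition alt_odd_power_sum :: "nat \<Rightarrow> nat \<Rightarrow> int" where
  "alt_odd_power_sum p n = (\<Sum>j<p. (-1)^j * int (2*j + 1)^n)"

lemma sum_atMost_even_odd:
  fixes g :: "nat \<Rightarrow> 'a::comm_monoid_add"
  shows "(\<Sum>i\<le>2*m. g i) = (\<Sum>l\<le>m. g (2*l)) + (\<Sum>l<m. g (2*l + 1))"
proof (induction m)
  case 0
  then show ?case by simp
next
  case (Suc m)
  have "(\<Sum>i\<le>2 * Suc m. g i) = (\<Sum>i\<le>2*m. g i) + g (2*m + 1) + g (2*m + 2)"
    by (simp add: numeral_2_eq_2 add.assoc)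
  then show ?case using Suc by (simp add: numeral_2_eq_2 ac_simps)
qed

lemma binomial_even_part:
  fixes x :: "'a::comm_ring_1"
  shows "(x + 1)^(2*m) + (x - 1)^(2*m) = 2 * (\<Sum>l\<le>m. of_nat ((2*m) choose (2*l)) * x^(2*l))"
proof -
  define n where "n = 2*m"
  have "(x + 1)^n + (x - 1)^n = (\<Sum>k\<le>n. of_nat (n choose k) * x^k * (1 + (-1)^(n-k)))"
    using binomial_ring[of x 1 n] binomial_ring[of x "-1" n]
    by (simp add: sum.distrib[symmetric] algebra_simps)
  also have "\<dots> = (\<Sum>l\<le>m. of_nat (n choose (2*l)) * x^(2*l) * (1 + (-1)^(n - 2*l)))
      + (\<Sum>l<m. of_nat (n choose (2*l+1)) * x^(2*l+1) * (1 + (-1)^(n - (2*l+1))))"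
    unfolding n_def by (rule sum_atMost_even_odd)
  also have "(\<Sum>l<m. of_nat (n choose (2*l+1)) * x^(2*l+1) * (1 + (-1)^(n - (2*l+1)))) = 0"
    by (intro sum.neutral ballI) (auto simp: n_def)
  also have "(\<Sum>l\<le>m. of_nat (n choose (2*l)) * x^(2*l) * (1 + (-1)^(n - 2*l)))
      = (\<Sum>l\<le>m. 2 * (of_nat (n choose (2*l)) * x^(2*l)))"
    by (intro sum.cong refl) (auto simp: n_def)
  finally show ?thesis
    unfolding n_def by (simp add: sum_distrib_left)
qed

lemma alt_odd_power_sum_rec:
  fixes p m :: nat
  assumes "odd p" "0 < m"
  shows "2 * (\<Sum>l\<le>m. int ((2*m) choose (2*l)) * alt_odd_power_sum p (2*l)) = (2 * int p)^(2*m)"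
proof -
  have telescope: "(\<Sum>j<q. (-1)^j * (x (Suc j) + x j)) = x 0 - (-1)^q * x q" for q and x :: "nat \<Rightarrow> int"
    by (induction q) (simp_all add: algebra_simps)
  have "(2 * int p)^(2*m) = (\<Sum>j<p. (-1)^j * ((int (2*j+1) + 1)^(2*m) + (int (2*j+1) - 1)^(2*m)))"
    using telescope[of "\<lambda>j. (2 * int j)^(2*m)" p] assms by (simp add: algebra_simps)
  also have "\<dots> = (\<Sum>j<p. (-1)^j * (2 * (\<Sum>l\<le>m. int ((2*m) choose (2*l)) * int (2*j+1)^(2*l))))"
    by (simp only: binomial_even_part)
  also have "\<dots> = 2 * (\<Sum>l\<le>m. int ((2*m) choose (2*l)) * alt_odd_power_sum p (2*l))"
    unfolding alt_odd_power_sum_def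
    by (simp add: sum_distrib_left sum_distrib_right sum.swap[of _ "{..<p}"] ac_simps)
  finally show ?thesis ..
qed

lemma alt_odd_power_sum_cong_E2:
  fixes p m :: nat
  assumes "odd p"
  shows "[alt_odd_power_sum p (2*m) = E2 m] (mod int p)"
proof (induction m rule: less_induct)
  case (less m)
  show ?case
  proof (cases "m = 0")
    case True
    have "(\<Sum>j<2*h + 1. (-1::int)^j) = 1" for h
      by (induction h) (simp_all add: numeral_2_eq_2)
    then have "alt_odd_power_sum p 0 = 1"
      using assms unfolding alt_odd_power_sum_def by (auto elim: oddE)
    then show ?thesis using True by simp
  next
    case False
    define \<sigma> where "\<sigma> = (\<Sum>l<m. int ((2*m) choose (2*l)) * alt_odd_power_sum p (2*l))"
    have "2 * (\<sigma> + alt_odd_power_sum p (2*m)) = (2 * int p)^(2*m)"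
      using alt_odd_power_sum_rec[OF assms, of m] False unfolding \<sigma>_def
      by (simp add: lessThan_Suc_atMost[symmetric])
    moreover have "[(2 * int p)^(2*m) = 2 * 0] (mod int p)"
      using False by (simp add: cong_0_iff power_mult_distrib)
    moreover have "coprime 2 (int p)" using assms by simp
    ultimately have "[\<sigma> + alt_odd_power_sum p (2*m) = 0] (mod int p)"
      by (metis cong_mult_lcancel)
    moreover have "[\<sigma> = (\<Sum>l<m. int ((2*m) choose (2*l)) * E2 l)] (mod int p)"
      unfolding \<sigma>_def by (intro cong_sum cong_scalar_left less.IH) simp
    ultimately have "[alt_odd_power_sum p (2*m) = - (\<Sum>l<m. int ((2*m) choose (2*l)) * E2 l)] (mod int p)"
      by (metis add_diff_cancel_left' cong_diff diff_0)
    then show ?thesis using False by simp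
  qed
qed

lemma sum_lessThan_odd_reflect:
  fixes f :: "nat \<Rightarrow> 'a::comm_monoid_add"
  shows "(\<Sum>j<2*h + 1. f j) = f h + (\<Sum>r\<in>{1..h}. f (h - r) + f (h + r))"
proof -
  have U: "{..<2*h + 1} = {..<h} \<union> ({h} \<union> {h+1..2*h})" by auto
  have "(\<Sum>j<2*h + 1. f j) = (\<Sum>j<h. f j) + (f h + (\<Sum>j\<in>{h+1..2*h}. f j))"
    unfolding U by (subst sum.union_disjoint, auto)+
  moreover have "(\<Sum>j<h. f j) = (\<Sum>r\<in>{1..h}. f (h - r))"
    by (rule sum.reindex_bij_witness[of _ "\<lambda>r. h - r" "\<lambda>j. h - j"]) auto
  moreover have "(\<Sum>j\<in>{h+1..2*h}. f j) = (\<Sum>r\<in>{1..h}. f (h + r))"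
    by (rule sum.reindex_bij_witness[of _ "\<lambda>r. h + r" "\<lambda>j. j - h"]) auto
  ultimately show ?thesis by (simp add: sum.distrib ac_simps)
qed

lemma alt_odd_power_sum_cong_half:
  fixes p h n :: nat
  assumes "p = 2*h + 1" "even n" "0 < n"
  shows "[alt_odd_power_sum p n = 2^(n+1) * (-1)^h * (\<Sum>r\<in>{1..h}. (-1)^r * int r^n)] (mod int p)"
proof -
  define f where "f j = (-1)^j * int (2*j + 1)^n" for j
  have "[f h = 0] (mod int p)"
    using assms by (simp add: f_def cong_0_iff)
  moreover have "[f (h - r) + f (h + r) = 2^(n+1) * (-1)^h * ((-1)^r * int r^n)] (mod int p)"
    if r: "r \<in> {1..h}" for r
  proof -
    have sign: "(-1::int)^(h - r) = (-1)^(h + r)"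
      using r by (simp add: minus_one_power_iff)
    have "int (2*(h - r) + 1) = int p - 2 * int r" "int (2*(h + r) + 1) = int p + 2 * int r"
      using r assms by auto
    then have minus: "[int (2*(h - r) + 1)^n = (- (2 * int r))^n] (mod int p)"
      and plus: "[int (2*(h + r) + 1)^n = (2 * int r)^n] (mod int p)"
      by (intro cong_pow, simp add: cong_iff_dvd_diff)+
    have "[f (h - r) + f (h + r) = (-1)^(h + r) * (- (2 * int r))^n + (-1)^(h + r) * (2 * int r)^n] (mod int p)"
      unfolding f_def sign by (intro cong_add cong_scalar_left minus plus)
    moreover have "(-1)^(h + r) * (- (2 * int r))^n + (-1)^(h + r) * (2 * int r)^n = 2^(n+1) * (-1)^h * ((-1)^r * int r^n)"
      using assms(2) by (simp add: power_add power_mult_distrib)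
    ultimately show ?thesis by metis
  qed
  then have "[(\<Sum>r\<in>{1..h}. f (h - r) + f (h + r)) = (\<Sum>r\<in>{1..h}. 2^(n+1) * (-1)^h * ((-1)^r * int r^n))] (mod int p)"
    by (rule cong_sum)
  ultimately have "[f h + (\<Sum>r\<in>{1..h}. f (h - r) + f (h + r)) = 0 + 2^(n+1) * (-1)^h * (\<Sum>r\<in>{1..h}. (-1)^r * int r^n)] (mod int p)"
    unfolding sum_distrib_left by (rule cong_add)
  then show ?thesis
    unfolding alt_odd_power_sum_def f_def assms(1) sum_lessThan_odd_reflect by simp
qed

lemma alt_half_power_sum_cong_euler:
  fixes p :: nat
  assumes "prime p" "p > 3"
  shows "[alt_half_power_sum p = 2 * (-1)^((p - 1) div 2) * euler (p - 3)] (mod int p)"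
proof -
  define h where "h = (p - 1) div 2"
  define \<epsilon> :: int where "\<epsilon> = (-1)^h"
  have p: "p = 2*h + 1" unfolding h_def using assms by (intro odd_prime_half) auto
  have even: "even (p - 3)" using p by presburger
  have "p - 3 + 1 = p - 2" "Suc (p - 2) = p - 1" using assms by simp_all
  then have "2 * \<epsilon> * (2^(p - 3 + 1) * \<epsilon> * alt_half_power_sum p) = 2^(p - 1) * alt_half_power_sum p"
    unfolding \<epsilon>_def by (simp add: ac_simps flip: power_add mult_2 power_Suc)
  also have "[\<dots> = 1 * alt_half_power_sum p] (mod int p)"
  proof (rule cong_scalar_right)
    have "\<not> p dvd 2" using assms by (auto dest: dvd_imp_le)
    from fermat_theorem_int[OF assms(1) this] show "[2 ^ (p - 1) = (1::int)] (mod int p)" by simp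
  qed
  finally have scale: "[2 * \<epsilon> * (2^(p - 3 + 1) * \<epsilon> * alt_half_power_sum p) = alt_half_power_sum p] (mod int p)"
    by simp
  have "[alt_odd_power_sum p (p - 3) = 2^(p - 3 + 1) * \<epsilon> * alt_half_power_sum p] (mod int p)"
    using alt_odd_power_sum_cong_half[OF p, of "p - 3"] even assms
    unfolding alt_half_power_sum_def \<epsilon>_def h_def[symmetric] by simp
  moreover have "[alt_odd_power_sum p (p - 3) = euler (p - 3)] (mod int p)"
    using alt_odd_power_sum_cong_E2[of p "(p - 3) div 2"] p even unfolding euler_def by auto
  ultimately have "[2^(p - 3 + 1) * \<epsilon> * alt_half_power_sum p = euler (p - 3)] (mod int p)"
    by (rule cong_trans[OF cong_sym])
  then have "[2 * \<epsilon> * (2^(p - 3 + 1) * \<epsilon> * alt_half_power_sum p) = 2 * \<epsilon> * euler (p - 3)] (mod int p)"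
    by (rule cong_scalar_left)
  from cong_trans[OF cong_sym[OF scale] this] show ?thesis
    unfolding \<epsilon>_def h_def .
qed

theorem S_mult_prime_cong:
  fixes p N :: nat
  assumes "prime p" "p > 3" "N < p"
  shows "[S (N*p) = S N + 4 * (-1)^((p - 1) div 2) * int (S_mult_coeff N) * int p^2 * euler (p - 3)] (mod (int p ^ 3))"
proof -
  define \<epsilon> :: int where "\<epsilon> = (-1)^((p - 1) div 2)"
  define C where "C = int (S_mult_coeff N)"
  have "[S (N*p) = S N + int p^2 * (2 * C * alt_half_power_sum p)] (mod (int p ^ 3))"
    using S_mult_cong_alt_half_power_sum[OF assms] unfolding C_def by (simp add: ac_simps)
  also have "[S N + int p^2 * (2 * C * alt_half_power_sum p) = S N + int p^2 * (2 * C * (2 * \<epsilon> * euler (p - 3)))] (mod (int p ^ 3))"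
    unfolding \<epsilon>_def by (intro cong_add cong_refl cong_mult_square_lift cong_scalar_left alt_half_power_sum_cong_euler assms(1,2))
  also have "S N + int p^2 * (2 * C * (2 * \<epsilon> * euler (p - 3))) = S N + 4 * \<epsilon> * C * int p^2 * euler (p - 3)"
    by (simp add: ac_simps)
  finally show ?thesis unfolding \<epsilon>_def C_def .
qed

lemma S_small: "S 1 = 4" "S 2 = 20" "S 3 = 112"
  by (simp_all add: S_def numeral_eq_Suc)

lemma S_mult_coeff_small: "S_mult_coeff 1 = 2" "S_mult_coeff 2 = 32" "S_mult_coeff 3 = 360"
  by (simp_all add: S_mult_coeff_def S_block_coeff_def numeral_eq_Suc)

theorem corollary3p1:
  fixes p :: nat
  assumes "prime p" and "p > 3"
  shows "[S p = 4 + 8 * (-1) ^ ((p - 1) div 2) * int p ^ 2 * euler (p - 3)] (mod (int p ^ 3)) \<and>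
         [S (2*p) = 20 + 128 * (-1) ^ ((p - 1) div 2) * int p ^ 2 * euler (p - 3)] (mod (int p ^ 3)) \<and>
         [S (3*p) = 112 + 1440 * (-1) ^ ((p - 1) div 2) * int p ^ 2 * euler (p - 3)] (mod (int p ^ 3))"
  using S_mult_prime_cong[OF assms, of 1] S_mult_prime_cong[OF assms, of 2] S_mult_prime_cong[OF assms, of 3] assms
  unfolding S_small S_mult_coeff_small by simp

end
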